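(* Let $X$ be any normed space. Then the rendezvous set $\mathcal{R}(X)$ is nonempty.
   Context: For a normed space $X$ let $S_X=\{x:\|x\|=1\}$ be its unit sphere and use the kernel $k(x,y)=\|x-y\|$. For $n\in\mathbb{N}$, $R_n(S_X):=\bigcap_{w_1,\dots,w_n\in S_X}\overline{\mathrm{conv}}\{\frac1n\sum_{j=1}^n \|x-w_j\|: x\in S_X\}$ (closed convex hull in $\mathbb{R}$, i.e. a closed interval), and $\mathcal{R}(X):=R(S_X):=\bigcap_{n=1}^\infty R_n(S_X)$. *)

theory Defs
  imports "HOL-Analysis.Analysis"
begin

definition unit_sphere :: "'a::real_normed_vector set" where
  "unit_sphere = {x. norm x = 1}"

definition rendezvous_n :: "nat \<Rightarrow> 'a::real_normed_vector itself \<Rightarrow> real set" where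
  "rendezvous_n n _ = (\<Inter>w \<in> {w :: nat \<Rightarrow> 'a. \<forall>j\<in>{1..n}. w j \<in> unit_sphere}.
      closure (convex hull {(1 / real n) * (\<Sum>j=1..n. norm (x - w j)) | x. x \<in> (unit_sphere :: 'a set)}))"

definition rendezvous_set :: "'a::real_normed_vector itself \<Rightarrow> real set" where
  "rendezvous_set T = (\<Inter>n \<in> {1..}. rendezvous_n n T)"

end

theory Submission
  imports Defs
begin

text \<open>For configurations \<open>w\<^sub>1,\<dots>,w\<^sub>n\<close> and \<open>v\<^sub>1,\<dots>,v\<^sub>m\<close> on the sphere, the mean over the
  \<open>v\<^sub>k\<close> of \<open>\<Sum>\<^sub>j \<parallel>v\<^sub>k - w\<^sub>j\<parallel>/n\<close> and the mean over the \<open>w\<^sub>j\<close> of \<open>\<Sum>\<^sub>k \<parallel>w\<^sub>j - v\<^sub>k\<parallel>/m\<close> are both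
  the mean of all \<open>mn\<close> distances. Hence the infimum of the averaged distance function of one
  configuration never exceeds the supremum of that of another, so the intervals
  \<open>[inf, sup]\<close>, each contained in the closed convex hull of the corresponding range, pairwise
  intersect, and the supremum of their left endpoints lies in all of them.\<close>

definition avg_dist :: "nat \<Rightarrow> (nat \<Rightarrow> 'a::real_normed_vector) \<Rightarrow> 'a \<Rightarrow> real" where
  "avg_dist n w x = (1 / real n) * (\<Sum>j=1..n. norm (x - w j))"

lemma rendezvous_n_eq:
  "rendezvous_n n TYPE('a::real_normed_vector) =
     (\<Inter>w \<in> {w. \<forall>j\<in>{1..n}. w j \<in> unit_sphere}.
        closure (convex hull (avg_dist n w ` (unit_sphere :: 'a set))))"
proof -
  have "{(1 / real n) * (\<Sum>j=1..n. norm (x - w j)) | x. x \<in> unit_sphere} =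
        avg_dist n w ` (unit_sphere :: 'a set)" for w
    unfolding avg_dist_def by auto
  then show ?thesis
    unfolding rendezvous_n_def by simp
qed

lemma avg_dist_le_2:
  assumes "n \<ge> 1" "\<forall>j\<in>{1..n}. w j \<in> unit_sphere" "x \<in> unit_sphere"
  shows "avg_dist n w x \<le> 2"
proof -
  have "norm (x - w j) \<le> 2" if "j \<in> {1..n}" for j
    using assms that norm_triangle_ineq4[of x "w j"] by (simp add: unit_sphere_def)
  then have "(\<Sum>j=1..n. norm (x - w j)) \<le> 2 * real n"
    using sum_mono[of "{1..n}" "\<lambda>j. norm (x - w j)" "\<lambda>_. 2"] by simp
  then show ?thesis
    using assms(1) by (simp add: avg_dist_def field_simps)
qed

lemma bounded_avg_dist_image:
  assumes "n \<ge> 1" "\<forall>j\<in>{1..n}. w j \<in> unit_sphere"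
  shows "bounded (avg_dist n w ` unit_sphere)"
proof -
  have "\<bar>avg_dist n w x\<bar> \<le> 2" if "x \<in> unit_sphere" for x
    using avg_dist_le_2[OF assms that] by (simp add: avg_dist_def sum_nonneg)
  then show ?thesis
    unfolding bounded_real by blast
qed

lemma avg_dist_mean_swap:
  fixes v w :: "nat \<Rightarrow> 'a::real_normed_vector"
  shows "(\<Sum>k=1..m. avg_dist n w (v k)) / real m = (\<Sum>j=1..n. avg_dist m v (w j)) / real n"
proof -
  have "(\<Sum>k=1..m. avg_dist n w (v k)) / real m =
        (\<Sum>k=1..m. \<Sum>j=1..n. norm (v k - w j)) / (real m * real n)"
    by (simp add: avg_dist_def sum_divide_distrib ac_simps)
  also have "\<dots> = (\<Sum>j=1..n. \<Sum>k=1..m. norm (w j - v k)) / (real m * real n)"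
    by (subst sum.swap) (simp add: norm_minus_commute ac_simps)
  also have "\<dots> = (\<Sum>j=1..n. avg_dist m v (w j)) / real n"
    by (simp add: avg_dist_def sum_divide_distrib ac_simps)
  finally show ?thesis .
qed

lemma Inf_avg_dist_le_Sup_avg_dist:
  fixes v w :: "nat \<Rightarrow> 'a::real_normed_vector"
  assumes n: "n \<ge> 1" "\<forall>j\<in>{1..n}. w j \<in> unit_sphere"
    and m: "m \<ge> 1" "\<forall>k\<in>{1..m}. v k \<in> unit_sphere"
  shows "Inf (avg_dist n w ` unit_sphere) \<le> Sup (avg_dist m v ` unit_sphere)"
proof -
  have "bdd_below (avg_dist n w ` unit_sphere)" "bdd_above (avg_dist m v ` unit_sphere)"
    using bounded_avg_dist_image[OF n] bounded_avg_dist_image[OF m]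
    by (auto intro: bounded_imp_bdd_below bounded_imp_bdd_above)
  then have lower: "\<And>k. k \<in> {1..m} \<Longrightarrow> Inf (avg_dist n w ` unit_sphere) \<le> avg_dist n w (v k)"
    and upper: "\<And>j. j \<in> {1..n} \<Longrightarrow> avg_dist m v (w j) \<le> Sup (avg_dist m v ` unit_sphere)"
    using n(2) m(2) by (auto intro: cInf_lower cSup_upper)
  have "Inf (avg_dist n w ` unit_sphere) \<le> (\<Sum>k=1..m. avg_dist n w (v k)) / real m"
    using sum_mono[of "{1..m}" "\<lambda>_. Inf (avg_dist n w ` unit_sphere)"] lower n(1) m(1)
    by (simp add: field_simps)
  also have "\<dots> = (\<Sum>j=1..n. avg_dist m v (w j)) / real n"
    by (rule avg_dist_mean_swap)
  also have "\<dots> \<le> Sup (avg_dist m v ` unit_sphere)"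
    using sum_mono[of "{1..n}" _ "\<lambda>_. Sup (avg_dist m v ` unit_sphere)"] upper n(1) m(1)
    by (simp add: field_simps)
  finally show ?thesis .
qed

lemma Inf_Sup_subset_closure_convex_hull:
  fixes V :: "real set"
  assumes "V \<noteq> {}" "bounded V"
  shows "{Inf V..Sup V} \<subseteq> closure (convex hull V)"
proof -
  have bdd: "bdd_below V" "bdd_above V"
    using assms(2) by (rule bounded_imp_bdd_below, rule bounded_imp_bdd_above)
  have "closure V \<subseteq> closure (convex hull V)"
    by (simp add: closure_mono hull_subset)
  then have ends: "Inf V \<in> closure (convex hull V)" "Sup V \<in> closure (convex hull V)"
    using closure_contains_Inf[OF assms(1) bdd(1)] closure_contains_Sup[OF assms(1) bdd(2)]
    by auto
  have "closed_segment (Inf V) (Sup V) \<subseteq> closure (convex hull V)"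
    using ends by (simp add: closed_segment_subset convex_closure)
  moreover have "Inf V \<le> Sup V"
    using assms(1) bdd(2,1) by (rule cInf_le_cSup)
  ultimately show ?thesis
    by (simp add: closed_segment_eq_real_ivl)
qed

lemma pairwise_intersecting_intervals_common_point:
  fixes a b :: "'i \<Rightarrow> real"
  assumes "I \<noteq> {}" and ends: "\<And>i j. i \<in> I \<Longrightarrow> j \<in> I \<Longrightarrow> a i \<le> b j"
  shows "\<exists>r. \<forall>i\<in>I. a i \<le> r \<and> r \<le> b i"
proof (intro exI ballI)
  fix i assume "i \<in> I"
  then have "bdd_above (a ` I)"
    using ends by (auto intro!: bdd_aboveI)
  then have "a i \<le> (SUP i\<in>I. a i)"
    using \<open>i \<in> I\<close> by (rule cSUP_upper2) simp
  moreover have "(SUP i\<in>I. a i) \<le> b i"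
    using assms \<open>i \<in> I\<close> by (auto intro: cSUP_least)
  ultimately show "a i \<le> (SUP i\<in>I. a i) \<and> (SUP i\<in>I. a i) \<le> b i" ..
qed

lemma avg_dist_ranges_common_point:
  assumes "(unit_sphere :: 'a::real_normed_vector set) \<noteq> {}"
  obtains r where "\<And>n (w :: nat \<Rightarrow> 'a). n \<ge> 1 \<Longrightarrow> \<forall>j\<in>{1..n}. w j \<in> unit_sphere \<Longrightarrow>
      r \<in> {Inf (avg_dist n w ` unit_sphere)..Sup (avg_dist n w ` unit_sphere)}"
proof -
  define configs where
    "configs = {(n, w :: nat \<Rightarrow> 'a). n \<ge> 1 \<and> (\<forall>j\<in>{1..n}. w j \<in> unit_sphere)}"
  obtain e :: 'a where "e \<in> unit_sphere"
    using assms by blast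
  then have "(1, \<lambda>_. e) \<in> configs"
    by (simp add: configs_def)
  then have "configs \<noteq> {}" by blast
  moreover have "\<And>c d. c \<in> configs \<Longrightarrow> d \<in> configs \<Longrightarrow>
      (\<lambda>(n, w). Inf (avg_dist n w ` unit_sphere)) c \<le> (\<lambda>(n, w). Sup (avg_dist n w ` unit_sphere)) d"
    by (auto simp: configs_def Inf_avg_dist_le_Sup_avg_dist)
  ultimately have "\<exists>r. \<forall>c\<in>configs.
      (\<lambda>(n, w). Inf (avg_dist n w ` unit_sphere)) c \<le> r \<and> r \<le> (\<lambda>(n, w). Sup (avg_dist n w ` unit_sphere)) c"
    by (rule pairwise_intersecting_intervals_common_point)
  then obtain r where r: "\<forall>c\<in>configs.
      (\<lambda>(n, w). Inf (avg_dist n w ` unit_sphere)) c \<le> r \<and> r \<le> (\<lambda>(n, w). Sup (avg_dist n w ` unit_sphere)) c"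
    by blast
  show thesis
    by (rule that) (use r in \<open>auto simp: configs_def\<close>)
qed

theorem corollary2p3:
  shows "rendezvous_set TYPE('a::real_normed_vector) \<noteq> {}"
proof (cases "(unit_sphere :: 'a set) = {}")
  case True
  then have "rendezvous_set TYPE('a) = UNIV"
    by (auto simp: rendezvous_set_def rendezvous_n_eq)
  then show ?thesis by simp
next
  case False
  obtain r where r: "\<And>n (w :: nat \<Rightarrow> 'a). n \<ge> 1 \<Longrightarrow> \<forall>j\<in>{1..n}. w j \<in> unit_sphere \<Longrightarrow>
      r \<in> {Inf (avg_dist n w ` unit_sphere)..Sup (avg_dist n w ` unit_sphere)}"
    using avg_dist_ranges_common_point[OF False] by blast
  have "r \<in> closure (convex hull (avg_dist n w ` unit_sphere))"
    if "n \<ge> 1" "\<forall>j\<in>{1..n}. w j \<in> unit_sphere" for n and w :: "nat \<Rightarrow> 'a"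
    using r[OF that] Inf_Sup_subset_closure_convex_hull[OF _ bounded_avg_dist_image[OF that]] False
    by blast
  then have "r \<in> rendezvous_set TYPE('a)"
    by (auto simp: rendezvous_set_def rendezvous_n_eq)
  then show ?thesis by blast
qed

end
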